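(* Let $k\ge k_0$ ($k_0$ a sufficiently large constant) and $\beta\geq k\ln 2-10\ln k$. Let $a$ be a clause on $k$ distinct variables $\partial a$, where each $x\in\partial a$ appears in $a$ either positively ($x\in\partial_1 a$) or negatively ($x\in\partial_{-1}a$). Let $(\nu_{x\to a})_{x\in\partial a}$ be probability distributions on $\{-1,1\}$, set $\partial_{\rm good}a=\{x\in\partial a:\nu_{x\to a}(1)\geq1-e^{-k\beta/2}\}$, and for $x\in\partial a$, $s\in\{\pm1\}$ define $$\hat\nu_{a\to x}(s)=\frac{\sum_{s_a\in\{\pm1\}^{\partial a}}\mathbf 1\{s_x=s\}\psi_{a,\beta}(s_a)\prod_{y\in\partial a\setminus\{x\}}\nu_{y\to a}(s_y)}{\sum_{s_a\in\{\pm1\}^{\partial a}}\psi_{a,\beta}(s_a)\prod_{y\in\partial a\setminus\{x\}}\nu_{y\to a}(s_y)}.$$ Then for every $x\in\partial a$: (a) $e^{-\beta}\leq\hat\nu_{a\to x}(1)/\hat\nu_{a\to x}(-1)\leq e^{\beta}$; (b) if $x\in\partial_1a$, then $\hat\nu_{a\to x}(1)/\hat\nu_{a\to x}(-1)\geq1$; (c) if $\partial_1a=\{x\}$ and $\partial_{-1}a\subset\partial_{\rm good}a$, then $\hat\nu_{a\to x}(1)/\hat\nu_{a\to x}(-1)\geq e^{0.99\beta}$; (d) if $p\ge1$ is an integer with $|(\partial_1a\setminus\{x\})\cap\partial_{\rm good}a|\geq p$, then $\hat\nu_{a\to x}(1)/\hat\nu_{a\to x}(-1)\geq\exp(-\e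xp(-pk\beta/3))$.
   Context: For $s_a\in\{\pm1\}^{\partial a}$ (value $1$ = true), the clause weight is $\psi_{a,\beta}(s_a)=e^{-\beta}$ if every literal of $a$ is false under $s_a$ (i.e. $s_y=-1$ for all $y\in\partial_1a$ and $s_y=1$ for all $y\in\partial_{-1}a$), and $\psi_{a,\beta}(s_a)=1$ otherwise. *)

theory Defs
  imports Complex_Main "HOL-Library.FuncSet"
begin

text \<open>A clause a is given by its (finite) variable set V = \<partial>a and a sign function
  pos: pos y = True iff y \<in> \<partial>_1 a (y appears positively), False iff y \<in> \<partial>_{-1} a.
  Spins take values in {-1,1} (1 = true).\<close>

definition pos_vars :: "'v set \<Rightarrow> ('v \<Rightarrow> bool) \<Rightarrow> 'v set" where
  "pos_vars V pos = {y \<in> V. pos y}"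

definition neg_vars :: "'v set \<Rightarrow> ('v \<Rightarrow> bool) \<Rightarrow> 'v set" where
  "neg_vars V pos = {y \<in> V. \<not> pos y}"

definition configs :: "'v set \<Rightarrow> ('v \<Rightarrow> int) set" where
  "configs V = PiE V (\<lambda>_. {-1, 1})"

definition psi :: "'v set \<Rightarrow> ('v \<Rightarrow> bool) \<Rightarrow> real \<Rightarrow> ('v \<Rightarrow> int) \<Rightarrow> real" where
  "psi V pos \<beta> s =
     (if (\<forall>y\<in>V. (pos y \<longrightarrow> s y = -1) \<and> (\<not> pos y \<longrightarrow> s y = 1)) then exp (-\<beta>) else 1)"

definition good_vars :: "'v set \<Rightarrow> ('v \<Rightarrow> int \<Rightarrow> real) \<Rightarrow> nat \<Rightarrow> real \<Rightarrow> 'v set" where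
  "good_vars V \<nu> k \<beta> = {y \<in> V. \<nu> y 1 \<ge> 1 - exp (- real k * \<beta> / 2)}"

definition msg_hat :: "'v set \<Rightarrow> ('v \<Rightarrow> bool) \<Rightarrow> real \<Rightarrow> ('v \<Rightarrow> int \<Rightarrow> real) \<Rightarrow> 'v \<Rightarrow> int \<Rightarrow> real" where
  "msg_hat V pos \<beta> \<nu> x s =
     (\<Sum>sa\<in>configs V. (if sa x = s then 1 else 0) * psi V pos \<beta> sa * (\<Prod>y\<in>V - {x}. \<nu> y (sa y)))
     / (\<Sum>sa\<in>configs V. psi V pos \<beta> sa * (\<Prod>y\<in>V - {x}. \<nu> y (sa y)))"

definition is_distr :: "(int \<Rightarrow> real) \<Rightarrow> bool" where
  "is_distr m \<longleftrightarrow> m 1 \<ge> 0 \<and> m (-1) \<ge> 0 \<and> m 1 + m (-1) = 1"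

end

theory Submission imports Defs begin

text \<open>Let \<open>q\<close> be the probability, under the incoming messages, that all literals of the clause
  other than that of \<open>x\<close> are false. Since \<open>\<psi>\<close> differs from \<open>1\<close> only on the all-false
  configuration, summing out the other variables shows that the outgoing message at the spin
  falsifying \<open>x\<close>'s literal, divided by the message at the other spin, equals
  \<open>1 - (1 - e\<^sup>-\<^sup>\<beta>) q \<in> [e\<^sup>-\<^sup>\<beta>, 1]\<close>. The ratio in the theorem is this number or its inverse
  according to the sign of \<open>x\<close>, which gives (a) and (b).
  In (c) all other literals are negative and good, so by Bernoulli \<open>q \<ge> 1 - k e\<^sup>-\<^sup>k\<^sup>\<beta>\<^sup>/\<^sup>2\<close> and
  the number is at most \<open>2 e\<^sup>-\<^sup>\<beta>\<close>. In (d) each of the \<open>p\<close> good positive literals is false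
  with probability at most \<open>e\<^sup>-\<^sup>k\<^sup>\<beta>\<^sup>/\<^sup>2\<close>, so \<open>q \<le> w\<^sup>3\<close> with \<open>w = e\<^sup>-\<^sup>p\<^sup>k\<^sup>\<beta>\<^sup>/\<^sup>6\<close>, and
  \<open>1 - w\<^sup>3 \<ge> exp (-w\<^sup>2)\<close>.\<close>

definition false_spin :: "('v \<Rightarrow> bool) \<Rightarrow> 'v \<Rightarrow> int" where
  "false_spin pos y = (if pos y then -1 else 1)"

definition false_prob :: "'v set \<Rightarrow> ('v \<Rightarrow> bool) \<Rightarrow> ('v \<Rightarrow> int \<Rightarrow> real) \<Rightarrow> 'v \<Rightarrow> real" where
  "false_prob V pos \<nu> x = (\<Prod>y\<in>V - {x}. \<nu> y (false_spin pos y))"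

text \<open>The quotient of \<open>msg_hat\<close> at \<open>false_spin pos x\<close> by \<open>msg_hat\<close> at the opposite spin
  (lemma \<open>msg_ratio_eq\<close>).\<close>
definition msg_false_ratio :: "'v set \<Rightarrow> ('v \<Rightarrow> bool) \<Rightarrow> real \<Rightarrow> ('v \<Rightarrow> int \<Rightarrow> real) \<Rightarrow> 'v \<Rightarrow> real" where
  "msg_false_ratio V pos \<beta> \<nu> x = 1 - (1 - exp (-\<beta>)) * false_prob V pos \<nu> x"

lemma finite_configs: "finite V \<Longrightarrow> finite (configs V)"
  unfolding configs_def by (simp add: finite_PiE)

lemma sum_configs_marginal:
  fixes h :: "int \<Rightarrow> real"
  assumes fin: "finite V" and xV: "x \<in> V" and dist: "\<forall>y\<in>V. is_distr (\<nu> y)"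
  shows "(\<Sum>sa\<in>configs V. h (sa x) * (\<Prod>y\<in>V - {x}. \<nu> y (sa y))) = h 1 + h (-1)"
proof -
  define g where "g y t = (if y = x then h t else \<nu> y t)" for y t
  have "(\<Sum>sa\<in>configs V. h (sa x) * (\<Prod>y\<in>V - {x}. \<nu> y (sa y)))
      = (\<Sum>sa\<in>configs V. \<Prod>y\<in>V. g y (sa y))"
  proof (rule sum.cong[OF refl])
    fix sa
    have "(\<Prod>y\<in>V - {x}. g y (sa y)) = (\<Prod>y\<in>V - {x}. \<nu> y (sa y))"
      by (rule prod.cong) (auto simp: g_def)
    then show "h (sa x) * (\<Prod>y\<in>V - {x}. \<nu> y (sa y)) = (\<Prod>y\<in>V. g y (sa y))"
      using fin xV by (simp add: prod.remove g_def)
  qed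
  also have "\<dots> = (\<Prod>y\<in>V. \<Sum>t\<in>{-1,1}. g y t)"
    unfolding configs_def by (rule prod_sum_PiE[symmetric]) (use fin in auto)
  also have "\<dots> = (\<Sum>t\<in>{-1,1}. g x t) * (\<Prod>y\<in>V - {x}. \<Sum>t\<in>{-1,1}. g y t)"
    using fin xV by (simp add: prod.remove)
  also have "(\<Prod>y\<in>V - {x}. \<Sum>t\<in>{-1,1}. g y t) = 1"
    using dist by (intro prod.neutral) (auto simp: g_def is_distr_def)
  finally show ?thesis by (simp add: g_def)
qed

lemma psi_eq_indicator_all_false:
  "psi V pos \<beta> sa = 1 - (1 - exp (-\<beta>)) * (if \<forall>y\<in>V. sa y = false_spin pos y then 1 else 0)"
  unfolding psi_def false_spin_def by auto

lemma configs_all_false: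
  "{sa \<in> configs V. \<forall>y\<in>V. sa y = false_spin pos y} = {restrict (false_spin pos) V}"
  unfolding configs_def false_spin_def by (auto simp: PiE_iff extensional_def split: if_splits)

lemma sum_configs_psi:
  fixes h :: "int \<Rightarrow> real"
  assumes fin: "finite V" and xV: "x \<in> V" and dist: "\<forall>y\<in>V. is_distr (\<nu> y)"
  shows "(\<Sum>sa\<in>configs V. h (sa x) * psi V pos \<beta> sa * (\<Prod>y\<in>V - {x}. \<nu> y (sa y)))
     = h 1 + h (-1) - (1 - exp (-\<beta>)) * h (false_spin pos x) * false_prob V pos \<nu> x"
proof -
  define P where "P sa = (\<Prod>y\<in>V - {x}. \<nu> y (sa y))" for sa
  define A where "A sa \<longleftrightarrow> (\<forall>y\<in>V. sa y = false_spin pos y)" for sa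
  have "(\<Sum>sa\<in>configs V. if A sa then h (sa x) * P sa else 0)
      = (\<Sum>sa\<in>{sa \<in> configs V. A sa}. h (sa x) * P sa)"
    using finite_configs[OF fin] by (simp add: sum.inter_filter)
  also have "\<dots> = h (false_spin pos x) * false_prob V pos \<nu> x"
    using xV by (simp add: A_def configs_all_false P_def false_prob_def)
  finally have all_false: "(\<Sum>sa\<in>configs V. if A sa then h (sa x) * P sa else 0)
      = h (false_spin pos x) * false_prob V pos \<nu> x" .
  have "(\<Sum>sa\<in>configs V. h (sa x) * psi V pos \<beta> sa * P sa)
      = (\<Sum>sa\<in>configs V. h (sa x) * P sa - (1 - exp (-\<beta>)) * (if A sa then h (sa x) * P sa else 0))"
    by (intro sum.cong) (auto simp: psi_eq_indicator_all_false A_def algebra_simps)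
  also have "\<dots> = h 1 + h (-1) - (1 - exp (-\<beta>)) * h (false_spin pos x) * false_prob V pos \<nu> x"
    using sum_configs_marginal[OF fin xV dist, of h]
    by (simp add: sum_subtractf sum_distrib_left[symmetric] all_false P_def)
  finally show ?thesis unfolding P_def .
qed

lemma false_prob_nonneg: "\<forall>y\<in>V. is_distr (\<nu> y) \<Longrightarrow> 0 \<le> false_prob V pos \<nu> x"
  unfolding false_prob_def false_spin_def is_distr_def by (auto intro!: prod_nonneg split: if_splits)

lemma false_prob_le_one: "\<forall>y\<in>V. is_distr (\<nu> y) \<Longrightarrow> false_prob V pos \<nu> x \<le> 1"
  unfolding false_prob_def false_spin_def is_distr_def by (auto intro!: prod_le_1 split: if_splits)

lemma msg_false_ratio_eq_convex:
  "msg_false_ratio V pos \<beta> \<nu> x = (1 - false_prob V pos \<nu> x) + false_prob V pos \<nu> x * exp (-\<beta>)"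
  unfolding msg_false_ratio_def by (simp add: algebra_simps)

lemma msg_false_ratio_pos:
  assumes "\<forall>y\<in>V. is_distr (\<nu> y)"
  shows "0 < msg_false_ratio V pos \<beta> \<nu> x"
proof (cases "false_prob V pos \<nu> x = 0")
  case True
  then show ?thesis unfolding msg_false_ratio_def by simp
next
  case False
  then have "0 < false_prob V pos \<nu> x * exp (-\<beta>)"
    using false_prob_nonneg[OF assms, of pos x] by simp
  then show ?thesis
    using false_prob_le_one[OF assms, of pos x] unfolding msg_false_ratio_eq_convex by linarith
qed

lemma msg_false_ratio_bounds:
  assumes "\<forall>y\<in>V. is_distr (\<nu> y)" and "0 \<le> \<beta>"
  shows "exp (-\<beta>) \<le> msg_false_ratio V pos \<beta> \<nu> x" "msg_false_ratio V pos \<beta> \<nu> x \<le> 1"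
proof -
  define q where "q = false_prob V pos \<nu> x"
  have q: "0 \<le> q" "q \<le> 1"
    unfolding q_def using false_prob_nonneg[OF assms(1)] false_prob_le_one[OF assms(1)] by auto
  have "exp (-\<beta>) \<le> 1" using assms(2) by simp
  then have "(1 - q) * exp (-\<beta>) \<le> 1 - q" using q by (simp add: mult_left_le)
  then show "exp (-\<beta>) \<le> msg_false_ratio V pos \<beta> \<nu> x"
    unfolding msg_false_ratio_eq_convex q_def[symmetric] by (simp add: algebra_simps)
  show "msg_false_ratio V pos \<beta> \<nu> x \<le> 1"
    unfolding msg_false_ratio_eq_convex q_def[symmetric]
    using \<open>exp (-\<beta>) \<le> 1\<close> q by (simp add: mult_left_le)
qed

lemma msg_ratio_eq:
  assumes fin: "finite V" and xV: "x \<in> V" and dist: "\<forall>y\<in>V. is_distr (\<nu> y)"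
  shows "msg_hat V pos \<beta> \<nu> x 1 / msg_hat V pos \<beta> \<nu> x (-1) =
    (if pos x then 1 / msg_false_ratio V pos \<beta> \<nu> x else msg_false_ratio V pos \<beta> \<nu> x)"
proof -
  define c where "c = 1 - exp (-\<beta>)"
  define q where "q = false_prob V pos \<nu> x"
  have num: "(\<Sum>sa\<in>configs V. (if sa x = s then 1 else 0) * psi V pos \<beta> sa * (\<Prod>y\<in>V - {x}. \<nu> y (sa y)))
      = 1 - c * (if false_spin pos x = s then 1 else 0) * q" if "s \<in> {-1, 1}" for s
    using sum_configs_psi[OF fin xV dist, of "\<lambda>t. if t = s then 1 else 0"] that
    unfolding c_def q_def by auto
  have den: "(\<Sum>sa\<in>configs V. psi V pos \<beta> sa * (\<Prod>y\<in>V - {x}. \<nu> y (sa y))) = 2 - c * q"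
    using sum_configs_psi[OF fin xV dist, of "\<lambda>_. 1"] unfolding c_def q_def by simp
  have t: "msg_false_ratio V pos \<beta> \<nu> x = 1 - c * q"
    unfolding msg_false_ratio_def c_def q_def ..
  have "0 < 1 - c * q" using msg_false_ratio_pos[OF dist, of pos \<beta> x] t by simp
  then show ?thesis
    unfolding msg_hat_def num[of 1, simplified] num[of "-1", simplified] den t
    by (auto simp: false_spin_def divide_simps)
qed

lemma msg_ratio_bounds:
  assumes "finite V" and "x \<in> V" and dist: "\<forall>y\<in>V. is_distr (\<nu> y)" and "0 \<le> \<beta>"
  shows "exp (-\<beta>) \<le> msg_hat V pos \<beta> \<nu> x 1 / msg_hat V pos \<beta> \<nu> x (-1)
    \<and> msg_hat V pos \<beta> \<nu> x 1 / msg_hat V pos \<beta> \<nu> x (-1) \<le> exp \<beta>"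
proof -
  define t where "t = msg_false_ratio V pos \<beta> \<nu> x"
  have t: "exp (-\<beta>) \<le> t" "t \<le> 1"
    unfolding t_def using msg_false_ratio_bounds[OF dist \<open>0 \<le> \<beta>\<close>] by auto
  have "0 < t" using t exp_gt_zero[of "-\<beta>"] by linarith
  then have "1 / t \<le> 1 / exp (-\<beta>)" using t by (intro divide_left_mono) auto
  also have "\<dots> = exp \<beta>" by (simp add: exp_minus')
  finally have "1 / t \<le> exp \<beta>" .
  moreover have "1 \<le> 1 / t" using t \<open>0 < t\<close> by (simp add: le_divide_eq)
  moreover have "exp (-\<beta>) \<le> 1" "1 \<le> exp \<beta>" using \<open>0 \<le> \<beta>\<close> by auto
  ultimately show ?thesis
    using t msg_ratio_eq[OF assms(1-3), of pos \<beta>] unfolding t_def by auto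
qed

lemma msg_ratio_ge_one:
  assumes "finite V" and "x \<in> V" and dist: "\<forall>y\<in>V. is_distr (\<nu> y)" and "0 \<le> \<beta>"
    and "x \<in> pos_vars V pos"
  shows "1 \<le> msg_hat V pos \<beta> \<nu> x 1 / msg_hat V pos \<beta> \<nu> x (-1)"
  using msg_ratio_eq[OF assms(1-3), of pos \<beta>] msg_false_ratio_bounds[OF dist \<open>0 \<le> \<beta>\<close>, of pos x]
    msg_false_ratio_pos[OF dist, of pos \<beta> x] \<open>x \<in> pos_vars V pos\<close>
  by (simp add: pos_vars_def le_divide_eq)

lemma msg_ratio_ge_msg_false_ratio:
  assumes "finite V" and "x \<in> V" and dist: "\<forall>y\<in>V. is_distr (\<nu> y)" and "0 \<le> \<beta>"
  shows "msg_false_ratio V pos \<beta> \<nu> x \<le> msg_hat V pos \<beta> \<nu> x 1 / msg_hat V pos \<beta> \<nu> x (-1)"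
  using msg_ratio_eq[OF assms(1-3), of pos \<beta>] msg_false_ratio_bounds[OF dist \<open>0 \<le> \<beta>\<close>, of pos x]
    msg_false_ratio_pos[OF dist, of pos \<beta> x]
  by (auto simp: le_divide_eq mult_le_one)

lemma false_prob_ge_Bernoulli:
  assumes fin: "finite V" and xV: "x \<in> V" and "0 \<le> \<epsilon>" "\<epsilon> \<le> 1"
    and high: "\<forall>y\<in>V - {x}. 1 - \<epsilon> \<le> \<nu> y (false_spin pos y)"
  shows "1 - real (card V - 1) * \<epsilon> \<le> false_prob V pos \<nu> x"
proof -
  have "1 + real (card V - 1) * (- \<epsilon>) \<le> (1 + (- \<epsilon>)) ^ (card V - 1)"
    using \<open>\<epsilon> \<le> 1\<close> by (intro Bernoulli_inequality) simp
  also have "\<dots> = (\<Prod>y\<in>V - {x}. 1 - \<epsilon>)" using fin xV by simp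
  also have "\<dots> \<le> false_prob V pos \<nu> x"
    unfolding false_prob_def using high \<open>\<epsilon> \<le> 1\<close> by (intro prod_mono) auto
  finally show ?thesis by simp
qed

lemma card_pred_mul_exp_le:
  assumes "2 \<le> \<beta>"
  shows "real (k - 1) * exp (- real k * \<beta> / 2) \<le> exp (-\<beta>)"
proof (cases "k \<le> 1")
  case False
  have "real (k - 1) \<le> 1 + (real k * \<beta> / 2 - \<beta>)"
  proof -
    have "(real k / 2 - 1) * 2 \<le> (real k / 2 - 1) * \<beta>"
      using False assms by (intro mult_left_mono) auto
    then show ?thesis using False by (simp add: algebra_simps of_nat_diff)
  qed
  also have "\<dots> \<le> exp (real k * \<beta> / 2 - \<beta>)" by (rule exp_ge_add_one_self)
  finally have "real (k - 1) * exp (- real k * \<beta> / 2)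
      \<le> exp (real k * \<beta> / 2 - \<beta>) * exp (- real k * \<beta> / 2)"
    by (intro mult_right_mono) auto
  also have "\<dots> = exp (-\<beta>)" by (simp flip: exp_add)
  finally show ?thesis .
qed simp

lemma msg_false_ratio_le_of_good_negatives:
  assumes fin: "finite V" and xV: "x \<in> V" and dist: "\<forall>y\<in>V. is_distr (\<nu> y)"
    and "card V = k" and pos_x: "pos_vars V pos = {x}"
    and neg_good: "neg_vars V pos \<subseteq> good_vars V \<nu> k \<beta>" and "100 \<le> \<beta>"
  shows "msg_false_ratio V pos \<beta> \<nu> x \<le> exp (- (99/100 * \<beta>))"
proof -
  define \<epsilon> where "\<epsilon> = exp (- real k * \<beta> / 2)"
  define q where "q = false_prob V pos \<nu> x"
  have \<epsilon>: "0 \<le> \<epsilon>" "\<epsilon> \<le> 1" unfolding \<epsilon>_def using \<open>100 \<le> \<beta>\<close> by auto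
  have "1 - \<epsilon> \<le> \<nu> y (false_spin pos y)" if "y \<in> V - {x}" for y
  proof -
    have "\<not> pos y" using pos_x that unfolding pos_vars_def by auto
    then have "y \<in> good_vars V \<nu> k \<beta>" using neg_good that unfolding neg_vars_def by auto
    then show ?thesis using \<open>\<not> pos y\<close> unfolding good_vars_def false_spin_def \<epsilon>_def by auto
  qed
  then have "1 - real (card V - 1) * \<epsilon> \<le> q"
    unfolding q_def using false_prob_ge_Bernoulli[OF fin xV \<epsilon>] by blast
  moreover have "real (card V - 1) * \<epsilon> \<le> exp (-\<beta>)"
    unfolding \<epsilon>_def \<open>card V = k\<close> using \<open>100 \<le> \<beta>\<close> by (intro card_pred_mul_exp_le) simp
  moreover have "q * exp (-\<beta>) \<le> exp (-\<beta>)"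
    using false_prob_le_one[OF dist] unfolding q_def by (simp add: mult_left_le_one_le)
  ultimately have "msg_false_ratio V pos \<beta> \<nu> x \<le> 2 * exp (-\<beta>)"
    unfolding msg_false_ratio_eq_convex q_def[symmetric] by linarith
  also have "\<dots> \<le> exp (\<beta> / 100) * exp (-\<beta>)"
  proof -
    have "2 \<le> exp (\<beta> / 100)" using exp_ge_add_one_self[of "\<beta> / 100"] \<open>100 \<le> \<beta>\<close> by linarith
    then show ?thesis by simp
  qed
  also have "\<dots> = exp (- (99/100 * \<beta>))" by (simp flip: exp_add)
  finally show ?thesis .
qed

lemma msg_ratio_ge_of_good_negatives:
  assumes fin: "finite V" and xV: "x \<in> V" and dist: "\<forall>y\<in>V. is_distr (\<nu> y)"
    and "card V = k" and pos_x: "pos_vars V pos = {x}"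
    and "neg_vars V pos \<subseteq> good_vars V \<nu> k \<beta>" and "100 \<le> \<beta>"
  shows "exp (99/100 * \<beta>) \<le> msg_hat V pos \<beta> \<nu> x 1 / msg_hat V pos \<beta> \<nu> x (-1)"
proof -
  define t where "t = msg_false_ratio V pos \<beta> \<nu> x"
  have t_pos: "0 < t" unfolding t_def by (rule msg_false_ratio_pos[OF dist])
  have t_le: "t \<le> exp (- (99/100 * \<beta>))"
    unfolding t_def by (rule msg_false_ratio_le_of_good_negatives[OF assms])
  have "exp (99/100 * \<beta>) = 1 / exp (- (99/100 * \<beta>))" by (simp add: exp_minus')
  also have "\<dots> \<le> 1 / t" by (rule divide_left_mono[OF t_le]) (simp_all add: t_pos)
  also have "\<dots> = msg_hat V pos \<beta> \<nu> x 1 / msg_hat V pos \<beta> \<nu> x (-1)"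
  proof -
    have "pos x" using pos_x unfolding pos_vars_def by blast
    then show ?thesis using msg_ratio_eq[OF fin xV dist, of pos \<beta>] by (simp add: t_def)
  qed
  finally show ?thesis .
qed

lemma exp_neg_sq_le_one_minus_cube:
  fixes w :: real
  assumes "0 \<le> w" and "w \<le> 1/2"
  shows "exp (- (w^2)) \<le> 1 - w^3"
proof -
  have "exp (- (w^2)) = 1 / exp (w^2)" by (simp add: exp_minus')
  also have "\<dots> \<le> 1 / (1 + w^2)"
    by (rule divide_left_mono[OF exp_ge_add_one_self]) (simp_all add: add_pos_nonneg)
  also have "\<dots> \<le> 1 - w^3"
  proof -
    have "w^3 \<le> (1/2)^3" using assms by (intro power_mono)
    then have "0 \<le> 1 - w - w^3" using assms by (simp add: power_divide)
    then have "0 \<le> w^2 * (1 - w - w^3)" by simp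
    then have "1 \<le> (1 - w^3) * (1 + w^2)" by (simp add: algebra_simps eval_nat_numeral)
    then show ?thesis by (simp add: divide_le_eq add_pos_nonneg)
  qed
  finally show ?thesis .
qed

lemma false_prob_le_power:
  assumes fin: "finite V" and dist: "\<forall>y\<in>V. is_distr (\<nu> y)" and S: "S \<subseteq> V - {x}"
    and "p \<le> card S" and "0 \<le> \<epsilon>" "\<epsilon> \<le> 1"
    and low: "\<forall>y\<in>S. \<nu> y (false_spin pos y) \<le> \<epsilon>"
  shows "false_prob V pos \<nu> x \<le> \<epsilon> ^ p"
proof -
  define f where "f y = \<nu> y (false_spin pos y)" for y
  have f: "0 \<le> f y" "f y \<le> 1" if "y \<in> V" for y
    using dist that unfolding f_def false_spin_def is_distr_def by auto
  have "false_prob V pos \<nu> x = prod f (V - {x} - S) * prod f S"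
    unfolding false_prob_def f_def[symmetric] using fin S by (intro prod.subset_diff) auto
  also have "\<dots> \<le> prod f S"
    using f S by (intro mult_left_le_one_le prod_nonneg prod_le_1) auto
  also have "\<dots> \<le> (\<Prod>y\<in>S. \<epsilon>)"
    using f S low unfolding f_def by (intro prod_mono) auto
  also have "\<dots> \<le> \<epsilon> ^ p"
    using \<open>p \<le> card S\<close> \<open>0 \<le> \<epsilon>\<close> \<open>\<epsilon> \<le> 1\<close> by (simp add: power_decreasing)
  finally show ?thesis .
qed

lemma msg_false_ratio_ge_of_good_positives:
  assumes fin: "finite V" and xV: "x \<in> V" and dist: "\<forall>y\<in>V. is_distr (\<nu> y)"
    and "card V = k" and "1 \<le> p" and p_good: "p \<le> card ((pos_vars V pos - {x}) \<inter> good_vars V \<nu> k \<beta>)"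
    and "6 \<le> \<beta>"
  shows "exp (- exp (- real p * real k * \<beta> / 3)) \<le> msg_false_ratio V pos \<beta> \<nu> x"
proof -
  define \<epsilon> where "\<epsilon> = exp (- real k * \<beta> / 2)"
  define w where "w = exp (- (real p * real k * \<beta> / 6))"
  define q where "q = false_prob V pos \<nu> x"
  have \<epsilon>: "0 \<le> \<epsilon>" "\<epsilon> \<le> 1" unfolding \<epsilon>_def using \<open>6 \<le> \<beta>\<close> by auto
  have "\<nu> y (false_spin pos y) \<le> \<epsilon>" if "y \<in> (pos_vars V pos - {x}) \<inter> good_vars V \<nu> k \<beta>" for y
    using that dist unfolding pos_vars_def good_vars_def false_spin_def is_distr_def \<epsilon>_def by auto
  then have "q \<le> \<epsilon> ^ p"
    unfolding q_def using p_good \<epsilon>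
    by (intro false_prob_le_power[OF fin dist, of "(pos_vars V pos - {x}) \<inter> good_vars V \<nu> k \<beta>"])
      (auto simp: pos_vars_def)
  also have "\<epsilon> ^ p = w ^ 3" unfolding \<epsilon>_def w_def by (simp flip: exp_of_nat_mult)
  finally have q_le: "q \<le> w ^ 3" .
  have "0 < card V" using fin xV by (auto simp: card_gt_0_iff)
  then have "1 \<le> k" using \<open>card V = k\<close> by simp
  then have "1 * 6 \<le> real p * real k * \<beta>"
    using \<open>1 \<le> p\<close> \<open>6 \<le> \<beta>\<close> mult_mono[of 1 "real p" 1 "real k"] by (intro mult_mono) auto
  then have "w \<le> exp (-1)" unfolding w_def by simp
  also have "exp (-1) \<le> (1/2 :: real)"
  proof -
    have "2 \<le> exp (1::real)" using exp_ge_add_one_self[of 1] by simp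
    then have "1 / exp 1 \<le> (1/2 :: real)" by (intro divide_left_mono) auto
    then show ?thesis by (simp add: exp_minus')
  qed
  finally have "w \<le> 1/2" .
  have "exp (- real p * real k * \<beta> / 3) = w ^ 2" unfolding w_def by (simp flip: exp_of_nat_mult)
  moreover have "0 \<le> w" unfolding w_def by simp
  ultimately have "exp (- exp (- real p * real k * \<beta> / 3)) \<le> 1 - w ^ 3"
    using exp_neg_sq_le_one_minus_cube[of w] \<open>w \<le> 1/2\<close> by simp
  also have "\<dots> \<le> 1 - q" using q_le by simp
  also have "\<dots> \<le> msg_false_ratio V pos \<beta> \<nu> x"
    using false_prob_nonneg[OF dist, of pos x] unfolding msg_false_ratio_eq_convex q_def by simp
  finally show ?thesis .
qed

lemma msg_ratio_properties:
  fixes V :: "'v set"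
  assumes fin: "finite V" and card: "card V = k" and dist: "\<forall>y\<in>V. is_distr (\<nu> y)"
    and xV: "x \<in> V" and "100 \<le> \<beta>"
  shows "let r = msg_hat V pos \<beta> \<nu> x 1 / msg_hat V pos \<beta> \<nu> x (-1);
             G = good_vars V \<nu> k \<beta> in
          (exp (-\<beta>) \<le> r \<and> r \<le> exp \<beta>)
          \<and> (x \<in> pos_vars V pos \<longrightarrow> r \<ge> 1)
          \<and> (pos_vars V pos = {x} \<and> neg_vars V pos \<subseteq> G \<longrightarrow> r \<ge> exp (99/100 * \<beta>))
          \<and> (\<forall>p::nat. p \<ge> 1 \<and> card ((pos_vars V pos - {x}) \<inter> G) \<ge> p \<longrightarrow>
               r \<ge> exp (- exp (- real p * real k * \<beta> / 3)))"
proof -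
  have "0 \<le> \<beta>" "6 \<le> \<beta>" using \<open>100 \<le> \<beta>\<close> by auto
  have good_pos: "exp (- exp (- real p * real k * \<beta> / 3))
      \<le> msg_hat V pos \<beta> \<nu> x 1 / msg_hat V pos \<beta> \<nu> x (-1)"
    if "1 \<le> p \<and> p \<le> card ((pos_vars V pos - {x}) \<inter> good_vars V \<nu> k \<beta>)" for p
    using order_trans[OF msg_false_ratio_ge_of_good_positives[OF fin xV dist card _ _ \<open>6 \<le> \<beta>\<close>]
        msg_ratio_ge_msg_false_ratio[OF fin xV dist \<open>0 \<le> \<beta>\<close>]] that
    by blast
  show ?thesis
    unfolding Let_def
    using msg_ratio_bounds[OF fin xV dist \<open>0 \<le> \<beta>\<close>] msg_ratio_ge_one[OF fin xV dist \<open>0 \<le> \<beta>\<close>]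
      msg_ratio_ge_of_good_negatives[OF fin xV dist card _ _ \<open>100 \<le> \<beta>\<close>] good_pos
    by blast
qed

lemma beta_ge_quarter_k:
  fixes k :: nat and \<beta> :: real
  assumes k: "20000 \<le> k" and \<beta>: "real k * ln 2 - 10 * ln (real k) \<le> \<beta>"
  shows "real k / 4 \<le> \<beta>"
proof -
  have k_real: "20000 \<le> real k" using k by simp
  have "ln (1/2::real) \<le> 1/2 - 1" by (rule ln_le_minus_one) simp
  then have "1/2 \<le> ln (2::real)" by (simp add: ln_div)
  then have "real k / 2 \<le> real k * ln 2" using k_real by simp
  have "ln (real k / 400) \<le> real k / 400 - 1" using k_real by (intro ln_le_minus_one) simp
  moreover have "ln (real k / 400) = ln (real k) - ln 400" using k_real by (simp add: ln_div)
  moreover have "ln (400::real) < 400" by simp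
  ultimately have "ln (real k) \<le> real k / 400 + 399" by linarith
  then show ?thesis using \<beta> \<open>real k / 2 \<le> real k * ln 2\<close> k_real by linarith
qed

theorem lemma3p5:
  shows "\<exists>k0::nat. \<forall>k\<ge>k0. \<forall>\<beta>::real. \<beta> \<ge> real k * ln 2 - 10 * ln (real k) \<longrightarrow>
    (\<forall>(V::nat set) (pos::nat \<Rightarrow> bool) (\<nu>::nat \<Rightarrow> int \<Rightarrow> real).
      finite V \<and> card V = k \<and> (\<forall>y\<in>V. is_distr (\<nu> y)) \<longrightarrow>
      (\<forall>x\<in>V.
        (let r = msg_hat V pos \<beta> \<nu> x 1 / msg_hat V pos \<beta> \<nu> x (-1);
             G = good_vars V \<nu> k \<beta> in
          (exp (-\<beta>) \<le> r \<and> r \<le> exp \<beta>)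
          \<and> (x \<in> pos_vars V pos \<longrightarrow> r \<ge> 1)
          \<and> (pos_vars V pos = {x} \<and> neg_vars V pos \<subseteq> G \<longrightarrow> r \<ge> exp (99/100 * \<beta>))
          \<and> (\<forall>p::nat. p \<ge> 1 \<and> card ((pos_vars V pos - {x}) \<inter> G) \<ge> p \<longrightarrow>
               r \<ge> exp (- exp (- real p * real k * \<beta> / 3))))))"
proof (intro exI[of _ 20000] allI impI ballI msg_ratio_properties)
  fix k :: nat and \<beta> :: real
  assume k: "20000 \<le> k" and "real k * ln 2 - 10 * ln (real k) \<le> \<beta>"
  then have "real k / 4 \<le> \<beta>" by (rule beta_ge_quarter_k)
  then show "100 \<le> \<beta>" using k by linarith
qed auto

end
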